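(* Let $(Q,P)$ be a weakly quasi-lattice ordered group and let $\Lambda$ be a $P$-graph with $\mathrm{FA}(\Lambda)\neq\emptyset$. For any filter $x\in\mathcal{F}(\Lambda)$, the following are equivalent: (1) $x\in\mathcal{X}(\Lambda)$, i.e. $x\cap\mathrm{FA}(\Lambda)\neq\emptyset$; (2) $x\cap\mathrm{FA}(\Lambda)\cap\lambda\Lambda\neq\emptyset$ for all $\lambda\in x$.
   Context: $(Q,P)$ weakly quasi-lattice ordered: $Q$ a discrete group, $P\subseteq Q$ a subsemigroup containing the identity $e$ with $P\cap P^{-1}=\{e\}$, and, with $p\le r$ meaning $pq=r$ for some $q\in P$, any two elements of $P$ with a common upper bound have a least common upper bound. A $P$-graph is a countable small category $\Lambda$ (range/source $r,s$) with a functor $d:\Lambda\to P$ with unique factorisation (if $d(\lambda)=pq$ there are unique $\mu,\nu$ with $\lambda=\mu\nu$, $d(\mu)=p$, $d(\nu)=q$). Write $\lambda\Lambda=\{\lambda\mu: s(\lambda)=r(\mu)\}$, $\mu\preceq\lambda$ iff $\lambda\in\mu\Lambda$. $\mathrm{FA}(\Lambda)$ is the set of $\lambda$ such that for all $\mu\in\lambda\Lambda,\nu\in\Lambda$ there is a finite $J\subseteq\Lambda$ with $\mu\Lambda\cap\nu\Lambda=\bigcup_{\kappa\in J}\kappa\Lambda$. A filter is a nonempty $x\subseteq\Lambda$ that is hereditary ($\lambda\preceq\mu\in x\Rightarrow\lambda\in x$) and directed ($\mu,\nu\in x$ implies some $\lambda\in x$ with $\mu,\nu\preceq\lambda$); $\mathcal{F}(\Lambda)$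 is the set of filters, and $\mathcal{X}(\Lambda)=\{x\in\mathcal{F}(\Lambda): x\cap\mathrm{FA}(\Lambda)\neq\emptyset\}$. *)

theory Defs
  imports "HOL-Algebra.Group" "HOL-Library.Countable_Set"
begin

definition Ple :: "('q, 'b) monoid_scheme \<Rightarrow> 'q set \<Rightarrow> 'q \<Rightarrow> 'q \<Rightarrow> bool" where
  "Ple G P p r \<longleftrightarrow> (\<exists>q\<in>P. p \<otimes>\<^bsub>G\<^esub> q = r)"

definition wqlo :: "('q, 'b) monoid_scheme \<Rightarrow> 'q set \<Rightarrow> bool" where
  "wqlo G P \<longleftrightarrow> group G \<and> P \<subseteq> carrier G \<and> \<one>\<^bsub>G\<^esub> \<in> P
     \<and> (\<forall>p\<in>P. \<forall>q\<in>P. p \<otimes>\<^bsub>G\<^esub> q \<in> P)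
     \<and> (\<forall>p\<in>P. inv\<^bsub>G\<^esub> p \<in> P \<longrightarrow> p = \<one>\<^bsub>G\<^esub>)
     \<and> (\<forall>p\<in>P. \<forall>q\<in>P. (\<exists>r\<in>P. Ple G P p r \<and> Ple G P q r) \<longrightarrow>
          (\<exists>l\<in>P. Ple G P p l \<and> Ple G P q l \<and>
              (\<forall>r\<in>P. Ple G P p r \<and> Ple G P q r \<longrightarrow> Ple G P l r)))"

record ('o, 'm, 'q) pgraph =
  Obj :: "'o set"
  Mor :: "'m set"
  rng :: "'m \<Rightarrow> 'o"
  src :: "'m \<Rightarrow> 'o"
  cmp :: "'m \<Rightarrow> 'm \<Rightarrow> 'm"
  idt :: "'o \<Rightarrow> 'm"
  deg :: "'m \<Rightarrow> 'q"

definition is_pgraph :: "('q, 'b) monoid_scheme \<Rightarrow> 'q set \<Rightarrow> ('o, 'm, 'q) pgraph \<Rightarrow> bool" where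
  "is_pgraph G P L \<longleftrightarrow>
     countable (Obj L) \<and> countable (Mor L)
     \<and> (\<forall>l\<in>Mor L. rng L l \<in> Obj L \<and> src L l \<in> Obj L)
     \<and> (\<forall>l\<in>Mor L. \<forall>m\<in>Mor L. src L l = rng L m \<longrightarrow>
          cmp L l m \<in> Mor L \<and> rng L (cmp L l m) = rng L l \<and> src L (cmp L l m) = src L m)
     \<and> (\<forall>l\<in>Mor L. \<forall>m\<in>Mor L. \<forall>n\<in>Mor L. src L l = rng L m \<longrightarrow> src L m = rng L n \<longrightarrow>
          cmp L (cmp L l m) n = cmp L l (cmp L m n))
     \<and> (\<forall>v\<in>Obj L. idt L v \<in> Mor L \<and> rng L (idt L v) = v \<and> src L (idt L v) = v)
     \<and> (\<forall>l\<in>Mor L. cmp L (idt L (rng L l)) l = l \<and> cmp L l (idt L (src L l)) = l)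
     \<and> (\<forall>l\<in>Mor L. deg L l \<in> P)
     \<and> (\<forall>l\<in>Mor L. \<forall>m\<in>Mor L. src L l = rng L m \<longrightarrow>
          deg L (cmp L l m) = deg L l \<otimes>\<^bsub>G\<^esub> deg L m)
     \<and> (\<forall>v\<in>Obj L. deg L (idt L v) = \<one>\<^bsub>G\<^esub>)
     \<and> (\<forall>l\<in>Mor L. \<forall>p\<in>P. \<forall>q\<in>P. deg L l = p \<otimes>\<^bsub>G\<^esub> q \<longrightarrow>
          (\<exists>!mn. fst mn \<in> Mor L \<and> snd mn \<in> Mor L \<and> src L (fst mn) = rng L (snd mn)
                 \<and> l = cmp L (fst mn) (snd mn) \<and> deg L (fst mn) = p \<and> deg L (snd mn) = q))"

definition lamL :: "('o, 'm, 'q) pgraph \<Rightarrow> 'm \<Rightarrow> 'm set" where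
  "lamL L l = {cmp L l m | m. m \<in> Mor L \<and> src L l = rng L m}"

definition ppre :: "('o, 'm, 'q) pgraph \<Rightarrow> 'm \<Rightarrow> 'm \<Rightarrow> bool" where
  "ppre L m l \<longleftrightarrow> l \<in> lamL L m"

definition FA :: "('o, 'm, 'q) pgraph \<Rightarrow> 'm set" where
  "FA L = {l \<in> Mor L. \<forall>m\<in>lamL L l. \<forall>n\<in>Mor L.
      \<exists>J. finite J \<and> J \<subseteq> Mor L \<and> lamL L m \<inter> lamL L n = (\<Union>k\<in>J. lamL L k)}"

definition is_filter :: "('o, 'm, 'q) pgraph \<Rightarrow> 'm set \<Rightarrow> bool" where
  "is_filter L x \<longleftrightarrow> x \<noteq> {} \<and> x \<subseteq> Mor L
     \<and> (\<forall>l\<in>Mor L. \<forall>m\<in>x. ppre L l m \<longrightarrow> l \<in> x)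
     \<and> (\<forall>m\<in>x. \<forall>n\<in>x. \<exists>l\<in>x. ppre L m l \<and> ppre L n l)"

definition filters :: "('o, 'm, 'q) pgraph \<Rightarrow> 'm set set" where
  "filters L = {x. is_filter L x}"

definition XL :: "('o, 'm, 'q) pgraph \<Rightarrow> 'm set set" where
  "XL L = {x \<in> filters L. x \<inter> FA L \<noteq> {}}"

end

theory Submission
  imports Defs
begin

text \<open>\<open>FA(\<Lambda>)\<close> is closed under extension, because \<open>\<nu> \<in> \<mu>\<Lambda>\<close> gives
  \<open>\<nu>\<Lambda> \<subseteq> \<mu>\<Lambda>\<close>. So if a filter meets \<open>FA(\<Lambda>)\<close> in \<open>\<mu>\<close>, then for any \<open>\<lambda>\<close> in the
  filter a common extension of \<open>\<lambda>\<close> and \<open>\<mu>\<close> in the filter lies in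
  \<open>x \<inter> FA(\<Lambda>) \<inter> \<lambda>\<Lambda>\<close>.\<close>

lemma lamL_subset_Mor:
  assumes "is_pgraph G P L" and "mu \<in> Mor L"
  shows "lamL L mu \<subseteq> Mor L"
  using assms unfolding lamL_def is_pgraph_def by auto

lemma lamL_mono:
  assumes pg: "is_pgraph G P L" and mu: "mu \<in> Mor L" and nu: "nu \<in> lamL L mu"
  shows "lamL L nu \<subseteq> lamL L mu"
proof
  fix k assume "k \<in> lamL L nu"
  then obtain n where n: "n \<in> Mor L" "src L nu = rng L n" "k = cmp L nu n"
    unfolding lamL_def by blast
  from nu obtain m where m: "m \<in> Mor L" "src L mu = rng L m" "nu = cmp L mu m"
    unfolding lamL_def by blast
  have src_nu: "src L nu = src L m"
    using pg mu m unfolding is_pgraph_def by simp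
  have "k = cmp L mu (cmp L m n)"
    using pg mu m n src_nu unfolding is_pgraph_def by simp
  moreover have "cmp L m n \<in> Mor L" "rng L (cmp L m n) = rng L m"
    using pg m n src_nu unfolding is_pgraph_def by auto
  ultimately show "k \<in> lamL L mu"
    using m unfolding lamL_def by auto
qed

lemma FA_extension:
  assumes pg: "is_pgraph G P L" and mu: "mu \<in> FA L" and nu: "nu \<in> lamL L mu"
  shows "nu \<in> FA L"
proof -
  have mu_Mor: "mu \<in> Mor L"
    using mu unfolding FA_def by simp
  have "nu \<in> Mor L"
    using lamL_subset_Mor[OF pg mu_Mor] nu by blast
  moreover have "lamL L nu \<subseteq> lamL L mu"
    using lamL_mono[OF pg mu_Mor nu] .
  ultimately show ?thesis
    using mu unfolding FA_def by blast
qed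

lemma filter_meets_FA_below:
  assumes pg: "is_pgraph G P L" and x: "is_filter L x"
    and mu: "mu \<in> x" "mu \<in> FA L" and l: "l \<in> x"
  shows "x \<inter> FA L \<inter> lamL L l \<noteq> {}"
proof -
  obtain nu where nu: "nu \<in> x" "nu \<in> lamL L mu" "nu \<in> lamL L l"
    using x mu(1) l unfolding is_filter_def ppre_def by blast
  have "nu \<in> FA L"
    using FA_extension[OF pg mu(2) nu(2)] .
  with nu show ?thesis by blast
qed

theorem lemma4p6:
  fixes G :: "('q, 'b) monoid_scheme" and P :: "'q set"
    and L :: "('o, 'm, 'q) pgraph" and x :: "'m set"
  assumes "wqlo G P"
    and "is_pgraph G P L"
    and "FA L \<noteq> {}"
    and "x \<in> filters L"
  shows "x \<in> XL L \<longleftrightarrow> (\<forall>l\<in>x. x \<inter> FA L \<inter> lamL L l \<noteq> {})"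
proof -
  have x: "is_filter L x"
    using assms(4) unfolding filters_def by simp
  show ?thesis
  proof
    assume "x \<in> XL L"
    then obtain mu where "mu \<in> x" "mu \<in> FA L"
      unfolding XL_def by blast
    then show "\<forall>l\<in>x. x \<inter> FA L \<inter> lamL L l \<noteq> {}"
      using filter_meets_FA_below[OF assms(2) x] by blast
  next
    assume below: "\<forall>l\<in>x. x \<inter> FA L \<inter> lamL L l \<noteq> {}"
    obtain l where "l \<in> x"
      using x unfolding is_filter_def by blast
    with below have "x \<inter> FA L \<noteq> {}" by blast
    then show "x \<in> XL L"
      using assms(4) unfolding XL_def by blast
  qed
qed

end
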